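(* Let $k\ge n\ge 3$, and let $\pi$ assign to each $n$-element subset $S\subseteq[k]$ a string $\pi(S)$ of length $n$ that is an ordering of the elements of $S$, such that $d(\pi(S),\pi(S'))\le 3$ for all $n$-element subsets $S,S'\subseteq[k]$ with $|S\oplus S'|=2$. Then every set $R\subseteq[k]$ with $|R|=n-1$ satisfies at least one of: (1) there exists $A_R\subseteq R$ with $|A_R|=n-3$ such that $R$ freezes $A_R$; or (2) $R$ is semi-frozen.
   Context: $[k]=\{1,\dots,k\}$; $d$ is Hamming distance; $\pi(S)[i]$ is the letter at position $i\in[n]$ of $\pi(S)$; $\oplus$ is symmetric difference of sets. For a set $R\subseteq[k]$, $\mathcal U_R$ is the set of all sets $S\subseteq[k]$ with $R\subset S$ and $|S|=|R|+1$. For $|R|=n-1$ and $A_R\subseteq R$, $R$ freezes $A_R$ (with freezing function $g_R$) if there is a one-to-one map $g_R:A_R\to[n]$ such that $\pi(S)[g_R(a)]=a$ for all $a\in A_R$ and all $S\in\mathcal U_R$. A set $R$ with $|R|=n-1$ is semi-frozen with semi-freezing function $h_R$ and wildcard index $w_R$ if $h_R:R\to[n]$ is one-to-one, $w_R$ is the unique index of $[n]$ not in the image of $h_R$, and for every $r\in R$ and every $S\in\mathcal U_R$, either $\pi(S)[h_R(r)]=r$ or $\pi(S)[w_R]=r$. *)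

theory Defs
  imports Main
begin

text \<open>Strings of length n are lists; position i of [n] is list index i - 1,
  so positions are represented 0-based as {..<n}.\<close>

definition hamming :: "nat list \<Rightarrow> nat list \<Rightarrow> nat" where
  "hamming xs ys = card {i. i < length xs \<and> i < length ys \<and> xs ! i \<noteq> ys ! i}"

definition symdiff :: "'a set \<Rightarrow> 'a set \<Rightarrow> 'a set" where
  "symdiff A B = (A - B) \<union> (B - A)"

definition upsets :: "nat \<Rightarrow> nat set \<Rightarrow> nat set set" where
  "upsets k R = {S. S \<subseteq> {1..k} \<and> R \<subset> S \<and> card S = card R + 1}"

definition freezes :: "(nat set \<Rightarrow> nat list) \<Rightarrow> nat \<Rightarrow> nat \<Rightarrow> nat set \<Rightarrow> nat set \<Rightarrow> bool" where
  "freezes \<pi> k n R A \<longleftrightarrow>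
     (\<exists>g. inj_on g A \<and> g ` A \<subseteq> {..<n} \<and>
          (\<forall>a\<in>A. \<forall>S\<in>upsets k R. \<pi> S ! g a = a))"

definition semi_frozen :: "(nat set \<Rightarrow> nat list) \<Rightarrow> nat \<Rightarrow> nat \<Rightarrow> nat set \<Rightarrow> bool" where
  "semi_frozen \<pi> k n R \<longleftrightarrow>
     (\<exists>h w. inj_on h R \<and> h ` R \<subseteq> {..<n} \<and> w < n \<and> w \<notin> h ` R \<and>
          {..<n} - h ` R = {w} \<and>
          (\<forall>r\<in>R. \<forall>S\<in>upsets k R. \<pi> S ! h r = r \<or> \<pi> S ! w = r))"

end

theory Submission
  imports Defs
begin

text \<open>Every \<open>S \<in> \<U>\<^sub>R\<close> yields the injection \<open>r \<mapsto> position of r in \<pi>(S)\<close>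
  from \<open>R\<close> into the \<open>n\<close> positions. Two of these maps disagree on at most two elements of \<open>R\<close>:
  every disagreement, and also the position of the element of \<open>S - S'\<close>, is a place where
  \<open>\<pi>(S)\<close> and \<open>\<pi>(S')\<close> differ. A family of injections \<open>R \<rightarrow> T\<close> with \<open>|T| = |R| + 1\<close> that pairwise
  disagree on at most two points either agrees with one of its members off a set of size two,
  which freezes the remaining \<open>n - 3\<close> elements, or stays within distance one of a single
  injection \<open>h\<close>; in the latter case an element that leaves its place \<open>h r\<close> can only go to the one
  position missed by \<open>h\<close>, which is the wildcard of a semi-freezing.\<close>

definition disagree :: "'a set \<Rightarrow> ('a \<Rightarrow> 'b) \<Rightarrow> ('a \<Rightarrow> 'b) \<Rightarrow> 'a set" where
  "disagree R f g = {r \<in> R. f r \<noteq> g r}"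

lemma finite_disagree: "finite R \<Longrightarrow> finite (disagree R f g)"
  by (simp add: disagree_def)

lemma card_insert_disagree_le_deviation:
  assumes "finite R" and "disagree R h g = {x}" and "x \<in> disagree R g f"
  shows "card (insert x (disagree R h f)) \<le> card (disagree R g f)"
proof (rule card_mono[OF finite_disagree[OF assms(1)]])
  show "insert x (disagree R h f) \<subseteq> disagree R g f"
    using assms(2,3) by (auto simp: disagree_def)
qed

lemma deviation_value_not_in_image:
  assumes "inj_on g R" and "disagree R h g = {x}"
  shows "g x \<notin> h ` R"
proof
  assume "g x \<in> h ` R"
  then obtain r where r: "r \<in> R" "g x = h r" by auto
  have "x \<in> disagree R h g" using assms(2) by simp
  then have x: "x \<in> R" "h x \<noteq> g x" by (simp_all add: disagree_def)
  then have "r \<noteq> x" using r by auto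
  then have "r \<notin> disagree R h g" using assms(2) by simp
  then have "g r = g x" using r by (simp add: disagree_def)
  then show False using inj_onD[OF assms(1) _ r(1) x(1)] \<open>r \<noteq> x\<close> by blast
qed

lemma complement_of_image_singleton:
  assumes "card T = Suc (card R)" and "finite R" and "inj_on h R" and "h ` R \<subseteq> T"
  obtains w where "T - h ` R = {w}"
proof -
  have "finite T" using assms(1) card.infinite by fastforce
  then have "card (T - h ` R) = 1"
    using assms by (simp add: card_Diff_subset card_image)
  with that show ?thesis by (auto simp: card_1_singleton_iff)
qed

text \<open>If \<open>f\<close> disagreed with \<open>h\<close> at all three deviation points, it would agree with each
  deviating map at its deviation point; these values all equal the unique point of \<open>T\<close> missed
  by \<open>h\<close>, contradicting injectivity of \<open>f\<close>.\<close>

lemma card_disagree_le_1_if_three_deviations: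
  assumes T: "card T = Suc (card R)" and "finite R" and h: "inj_on h R" "h ` R \<subseteq> T"
    and F: "\<And>g. g \<in> F \<Longrightarrow> inj_on g R \<and> g ` R \<subseteq> T"
    and X: "card X = 3" "\<And>x. x \<in> X \<Longrightarrow> \<exists>g\<in>F. disagree R h g = {x}"
    and f: "inj_on f R" "\<And>g. g \<in> F \<Longrightarrow> card (disagree R g f) \<le> 2"
  shows "card (disagree R h f) \<le> 1"
proof (cases "X \<subseteq> disagree R h f")
  case True
  obtain w where w: "T - h ` R = {w}"
    using complement_of_image_singleton[OF T \<open>finite R\<close> h] .
  have "f x = w" if x: "x \<in> X" for x
  proof -
    obtain g where g: "g \<in> F" "disagree R h g = {x}" using X(2)[OF x] by blast
    have "x \<in> disagree R h g" using g(2) by simp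
    then have "x \<in> R" by (simp add: disagree_def)
    have "f x = g x"
    proof (rule ccontr)
      assume "f x \<noteq> g x"
      then have "x \<in> disagree R g f" using \<open>x \<in> R\<close> by (auto simp: disagree_def)
      have "card X \<le> card (disagree R h f)"
        by (rule card_mono[OF finite_disagree[OF \<open>finite R\<close>] True])
      also have "\<dots> \<le> card (insert x (disagree R h f))"
        by (rule card_mono) (simp_all add: finite_disagree[OF \<open>finite R\<close>] subset_insertI)
      also have "\<dots> \<le> card (disagree R g f)"
        by (rule card_insert_disagree_le_deviation[OF \<open>finite R\<close> g(2) \<open>x \<in> disagree R g f\<close>])
      finally show False using X(1) f(2)[OF g(1)] by simp
    qed
    moreover have "g x \<in> T - h ` R"
      using deviation_value_not_in_image[of g R h x] F[OF g(1)] g(2) \<open>x \<in> R\<close> by auto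
    ultimately show ?thesis using w by simp
  qed
  obtain x y where xy: "x \<in> X" "y \<in> X" "x \<noteq> y"
    using X(1) by (auto simp: card_3_iff)
  moreover have "X \<subseteq> R" using True by (auto simp: disagree_def)
  ultimately have "f x \<noteq> f y" using f(1) by (auto dest: inj_onD)
  with \<open>\<And>x. x \<in> X \<Longrightarrow> f x = w\<close> xy show ?thesis by simp
next
  case False
  then obtain x g where x: "x \<in> X" "x \<notin> disagree R h f" and g: "g \<in> F" "disagree R h g = {x}"
    using X(2) by blast
  have "x \<in> disagree R h g" using g(2) by simp
  with x(2) have "x \<in> disagree R g f" by (auto simp: disagree_def)
  then have "card (insert x (disagree R h f)) \<le> card (disagree R g f)"
    by (rule card_insert_disagree_le_deviation[OF \<open>finite R\<close> g(2)])
  moreover have "card (insert x (disagree R h f)) = Suc (card (disagree R h f))"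
    by (rule card_insert_disjoint[OF finite_disagree[OF \<open>finite R\<close>] x(2)])
  ultimately show ?thesis using f(2)[OF g(1)] by linarith
qed

lemma inj_on_upd_split_deviation:
  assumes inj: "inj_on f0 R" "inj_on f1 R" "inj_on f3 R"
    and ab: "disagree R f0 f1 = {a, b}" "a \<noteq> b"
    and f3: "f3 a = f0 a" "f3 b = f1 b"
  shows "inj_on (f0(b := f1 b)) R"
proof (rule inj_on_fun_updI[OF inj(1)])
  have "a \<in> disagree R f0 f1" "b \<in> disagree R f0 f1" using ab(1) by simp_all
  then have a: "a \<in> R" and b: "b \<in> R" "f0 b \<noteq> f1 b" by (simp_all add: disagree_def)
  show "f1 b \<notin> f0 ` R"
  proof
    assume "f1 b \<in> f0 ` R"
    then obtain s where s: "s \<in> R" "f1 b = f0 s" by blast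
    consider "s = b" | "s = a" | "s \<in> R - {a, b}" using s(1) by blast
    then show False
    proof cases
      case 1
      then show False using s(2) b(2) by simp
    next
      case 2
      then have "f3 b = f3 a" using s(2) f3 by simp
      then show False using inj_onD[OF inj(3)] a b(1) ab(2) by blast
    next
      case 3
      then have "s \<notin> disagree R f0 f1" using ab(1) by simp
      with s have "f1 b = f1 s" by (simp add: disagree_def)
      then show False using inj_onD[OF inj(2)] b(1) 3 by blast
    qed
  qed
qed

lemma near_injection_if_split_deviation:
  assumes T: "card T = Suc (card R)" and "finite R"
    and F: "\<And>f. f \<in> F \<Longrightarrow> inj_on f R \<and> f ` R \<subseteq> T"
    and close: "\<And>f g. f \<in> F \<Longrightarrow> g \<in> F \<Longrightarrow> card (disagree R f g) \<le> 2"
    and f013: "f0 \<in> F" "f1 \<in> F" "f3 \<in> F"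
    and ab: "disagree R f0 f1 = {a, b}" "a \<noteq> b"
    and c: "c \<in> R - {a, b}" "f3 c \<noteq> f0 c"
    and f3: "f3 a = f0 a" "f3 b = f1 b"
  shows "\<exists>h. inj_on h R \<and> h ` R \<subseteq> T \<and> (\<forall>f\<in>F. card (disagree R h f) \<le> 1)"
proof -
  have "a \<in> disagree R f0 f1" "b \<in> disagree R f0 f1" using ab(1) by simp_all
  then have a: "a \<in> R" "f0 a \<noteq> f1 a" and b: "b \<in> R" "f0 b \<noteq> f1 b"
    by (simp_all add: disagree_def)
  have f1_eq_f0: "f1 r = f0 r" if r: "r \<in> R - {a, b}" for r
  proof -
    have "r \<notin> disagree R f0 f1" using r ab(1) by simp
    with r show ?thesis by (simp add: disagree_def)
  qed
  have "{b, c} \<subseteq> disagree R f0 f3" using b c f3(2) by (auto simp: disagree_def)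
  moreover have "card (disagree R f0 f3) \<le> card {b, c}"
    using close[OF f013(1,3)] c(1) by (auto simp: card_insert_if)
  ultimately have d03: "disagree R f0 f3 = {b, c}"
    by (intro card_seteq[symmetric]) (simp_all add: finite_disagree[OF \<open>finite R\<close>])
  \<comment> \<open>Moving \<open>b\<close> to its \<open>f1\<close>-place gives a map from which \<open>f0\<close>, \<open>f1\<close>, \<open>f3\<close> deviate at \<open>b\<close>, \<open>a\<close>, \<open>c\<close>.\<close>
  define h where "h = f0(b := f1 b)"
  have "disagree R h f0 = {b}"
    by (rule set_eqI) (use b in \<open>simp add: h_def disagree_def\<close>)
  moreover have "disagree R h f1 = {a}"
  proof (rule set_eqI)
    fix r show "r \<in> disagree R h f1 \<longleftrightarrow> r \<in> {a}"
      using a ab(2) f1_eq_f0[of r] by (cases "r = b"; cases "r = a") (auto simp: h_def disagree_def)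
  qed
  moreover have "disagree R h f3 = {c}"
  proof (rule set_eqI)
    fix r
    have "r \<in> disagree R f0 f3 \<longleftrightarrow> r = b \<or> r = c" using d03 by simp
    then show "r \<in> disagree R h f3 \<longleftrightarrow> r \<in> {c}"
      using b c f3(2) by (cases "r = b") (auto simp: h_def disagree_def)
  qed
  ultimately have deviations: "\<exists>g\<in>F. disagree R h g = {x}" if "x \<in> {a, b, c}" for x
    using that f013 by blast
  have "inj_on f0 R" "inj_on f1 R" "inj_on f3 R"
    using F[OF f013(1)] F[OF f013(2)] F[OF f013(3)] by simp_all
  then have h_inj: "inj_on h R"
    unfolding h_def by (rule inj_on_upd_split_deviation[OF _ _ _ ab f3])
  have h_img: "h ` R \<subseteq> T" using F[OF f013(1)] F[OF f013(2)] b(1) by (auto simp: h_def)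
  have three: "card {a, b, c} = 3" using ab(2) c(1) by (simp add: card_3_iff) blast
  have "card (disagree R h f) \<le> 1" if "f \<in> F" for f
    using card_disagree_le_1_if_three_deviations[OF T \<open>finite R\<close> h_inj h_img F three deviations]
      F[OF that] close[OF _ that] by blast
  with h_inj h_img show ?thesis by blast
qed

lemma near_injection_if_deviation_off_pair:
  assumes T: "card T = Suc (card R)" and "finite R"
    and F: "\<And>f. f \<in> F \<Longrightarrow> inj_on f R \<and> f ` R \<subseteq> T"
    and close: "\<And>f g. f \<in> F \<Longrightarrow> g \<in> F \<Longrightarrow> card (disagree R f g) \<le> 2"
    and f013: "f0 \<in> F" "f1 \<in> F" "f3 \<in> F"
    and ab: "disagree R f0 f1 = {a, b}" "a \<noteq> b"
    and c: "c \<in> R - {a, b}" "f3 c \<noteq> f0 c"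
  shows "\<exists>h. inj_on h R \<and> h ` R \<subseteq> T \<and> (\<forall>f\<in>F. card (disagree R h f) \<le> 1)"
proof -
  have "a \<in> disagree R f0 f1" "b \<in> disagree R f0 f1" using ab(1) by simp_all
  then have a: "a \<in> R" "f0 a \<noteq> f1 a" and b: "b \<in> R" "f0 b \<noteq> f1 b"
    by (simp_all add: disagree_def)
  have "c \<notin> disagree R f0 f1" using ab(1) c(1) by simp
  then have "f1 c = f0 c" using c(1) by (simp add: disagree_def)
  have no_triple: False if "{a, b, c} \<subseteq> disagree R g f3" "g \<in> F" for g
  proof -
    have "card {a, b, c} \<le> card (disagree R g f3)"
      by (rule card_mono[OF finite_disagree[OF \<open>finite R\<close>] that(1)])
    moreover have "card {a, b, c} = 3" using ab(2) c(1) by (simp add: card_3_iff) blast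
    ultimately show False using close[OF that(2) f013(3)] by simp
  qed
  have "f3 a = f0 a \<or> f3 b = f0 b"
  proof (rule ccontr)
    assume "\<not> ?thesis"
    then have "{a, b, c} \<subseteq> disagree R f0 f3" using a(1) b(1) c by (auto simp: disagree_def)
    then show False using no_triple f013(1) by blast
  qed
  moreover have "f3 a = f1 a \<or> f3 b = f1 b"
  proof (rule ccontr)
    assume "\<not> ?thesis"
    then have "{a, b, c} \<subseteq> disagree R f1 f3"
      using a(1) b(1) c \<open>f1 c = f0 c\<close> by (auto simp: disagree_def)
    then show False using no_triple f013(2) by blast
  qed
  ultimately consider (a_fixed) "f3 a = f0 a" "f3 b = f1 b" | (b_fixed) "f3 b = f0 b" "f3 a = f1 a"
    using a(2) b(2) by force
  then show ?thesis
  proof cases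
    case a_fixed
    show ?thesis by (rule near_injection_if_split_deviation[OF T \<open>finite R\<close> F close f013 ab c a_fixed])
  next
    case b_fixed
    have ba: "disagree R f0 f1 = {b, a}" "b \<noteq> a" "c \<in> R - {b, a}" using ab c(1) by auto
    show ?thesis
      by (rule near_injection_if_split_deviation[OF T \<open>finite R\<close> F close f013 ba c(2) b_fixed])
  qed
qed

lemma injection_family_dichotomy:
  assumes T: "card T = Suc (card R)" and "finite R"
    and F: "\<And>f. f \<in> F \<Longrightarrow> inj_on f R \<and> f ` R \<subseteq> T"
    and close: "\<And>f g. f \<in> F \<Longrightarrow> g \<in> F \<Longrightarrow> card (disagree R f g) \<le> 2"
    and f0: "f0 \<in> F"
  shows "(\<exists>B \<subseteq> R. card B \<le> 2 \<and> (\<forall>f\<in>F. disagree R f0 f \<subseteq> B)) \<or>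
         (\<exists>h. inj_on h R \<and> h ` R \<subseteq> T \<and> (\<forall>f\<in>F. card (disagree R h f) \<le> 1))"
proof (cases "\<forall>f\<in>F. card (disagree R f0 f) \<le> 1")
  case True
  then show ?thesis using F[OF f0] by blast
next
  case False
  then obtain f1 where "f1 \<in> F" "\<not> card (disagree R f0 f1) \<le> 1" by blast
  with close[OF f0] have f1: "f1 \<in> F" "card (disagree R f0 f1) = 2" by fastforce+
  then obtain a b where ab: "disagree R f0 f1 = {a, b}" "a \<noteq> b" by (auto simp: card_2_iff)
  show ?thesis
  proof (cases "\<forall>f\<in>F. disagree R f0 f \<subseteq> {a, b}")
    case True
    moreover have "{a, b} \<subseteq> R" using ab(1) by (auto simp: disagree_def)
    ultimately show ?thesis by (intro disjI1 exI[of _ "{a, b}"]) (simp add: card_insert_if)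
  next
    case False
    then obtain f3 c where "f3 \<in> F" "c \<in> disagree R f0 f3" "c \<notin> {a, b}" by blast
    then show ?thesis
      using near_injection_if_deviation_off_pair[OF T \<open>finite R\<close> F close f0 f1(1) _ ab, of f3 c]
      by (auto simp: disagree_def)
  qed
qed

text \<open>For \<open>x \<notin> set xs\<close> the value of \<open>position xs x\<close> is unspecified; every use below has \<open>x \<in> set xs\<close>.\<close>

definition position :: "'a list \<Rightarrow> 'a \<Rightarrow> nat" where
  "position xs x = (THE i. i < length xs \<and> xs ! i = x)"

lemma position_nth: "distinct xs \<Longrightarrow> i < length xs \<Longrightarrow> position xs (xs ! i) = i"
  unfolding position_def by (rule the_equality) (auto simp: nth_eq_iff_index_eq)

lemma position_less_length: "distinct xs \<Longrightarrow> x \<in> set xs \<Longrightarrow> position xs x < length xs"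
  by (metis in_set_conv_nth position_nth)

lemma nth_position: "distinct xs \<Longrightarrow> x \<in> set xs \<Longrightarrow> xs ! position xs x = x"
  by (metis in_set_conv_nth position_nth)

lemma inj_on_position: "distinct xs \<Longrightarrow> inj_on (position xs) (set xs)"
  by (rule inj_onI) (metis nth_position)

lemma position_inj_into:
  assumes "distinct xs" and "R \<subseteq> set xs"
  shows "inj_on (position xs) R \<and> position xs ` R \<subseteq> {..<length xs}"
  using inj_on_subset[OF inj_on_position[OF assms(1)] assms(2)]
    position_less_length[OF assms(1)] assms(2) by blast

text \<open>Each element of \<open>R\<close> whose position moves, and also \<open>x\<close> itself, occupies in \<open>xs\<close> a place
  where \<open>ys\<close> differs.\<close>

lemma card_disagree_position_less_hamming:
  assumes xs: "distinct xs" "R \<subseteq> set xs" "x \<in> set xs"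
    and ys: "distinct ys" "R \<subseteq> set ys" "x \<notin> set ys"
    and "length xs = length ys"
  shows "card (disagree R (position xs) (position ys)) < hamming xs ys"
proof -
  define D where "D = disagree R (position xs) (position ys)"
  have "finite R" using xs(2) finite_subset by blast
  then have D: "D \<subseteq> R" "finite D" by (auto simp: D_def disagree_def)
  have "x \<notin> D" using D(1) xs(3) ys(2,3) by blast
  have "position xs ` insert x D \<subseteq> {i. i < length xs \<and> i < length ys \<and> xs ! i \<noteq> ys ! i}"
  proof
    fix i assume "i \<in> position xs ` insert x D"
    then obtain r where r: "r \<in> insert x D" "i = position xs r" by blast
    have "r \<in> set xs" using r(1) D(1) xs(2,3) by blast
    then have i: "i < length xs" "xs ! i = r"
      using r(2) position_less_length[OF xs(1)] nth_position[OF xs(1)] by simp_all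
    have "ys ! i \<noteq> r"
    proof
      assume "ys ! i = r"
      then have "r \<in> set ys" using i(1) \<open>length xs = length ys\<close> by (metis nth_mem)
      then have "r \<in> D" using r(1) ys(3) by blast
      moreover have "position ys r = i"
        using position_nth[OF ys(1)] i(1) \<open>ys ! i = r\<close> \<open>length xs = length ys\<close> by metis
      ultimately show False using r(2) by (simp add: D_def disagree_def)
    qed
    with i \<open>length xs = length ys\<close> show "i \<in> {i. i < length xs \<and> i < length ys \<and> xs ! i \<noteq> ys ! i}"
      by simp
  qed
  then have "card (position xs ` insert x D) \<le> hamming xs ys"
    unfolding hamming_def by (rule card_mono[rotated]) simp
  moreover have "card (position xs ` insert x D) = Suc (card D)"
    using inj_on_subset[OF inj_on_position[OF xs(1)]] D xs(2,3) \<open>x \<notin> D\<close>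
    by (subst card_image) auto
  ultimately show ?thesis by (simp add: D_def)
qed

lemma upsets_eq_image_insert:
  assumes "R \<subseteq> {1..k}"
  shows "upsets k R = (\<lambda>x. insert x R) ` ({1..k} - R)"
proof -
  have "finite R" using assms finite_subset by blast
  have "S \<in> (\<lambda>x. insert x R) ` ({1..k} - R)" if S: "S \<in> upsets k R" for S
  proof -
    have S': "S \<subseteq> {1..k}" "R \<subset> S" "card S = card R + 1" using S by (auto simp: upsets_def)
    then have "card (S - R) = 1" by (simp add: card_Diff_subset \<open>finite R\<close> less_imp_le)
    then obtain x where "S - R = {x}" by (auto simp: card_1_singleton_iff)
    then show ?thesis using S' by blast
  qed
  moreover have "insert x R \<in> upsets k R" if "x \<in> {1..k} - R" for x
    using that assms \<open>finite R\<close> by (auto simp: upsets_def)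
  ultimately show ?thesis by blast
qed

lemma ex_upset:
  assumes "R \<subseteq> {1..k}" and "card R < k"
  shows "\<exists>S. S \<in> upsets k R"
proof -
  have "finite R" using assms(1) finite_subset by blast
  with assms(1) have "card ({1..k} - R) = k - card R" by (simp add: card_Diff_subset)
  then have "0 < card ({1..k} - R)" using assms(2) by simp
  then have "{1..k} - R \<noteq> {}" by (simp add: card_gt_0_iff)
  then show ?thesis using upsets_eq_image_insert[OF assms(1)] by blast
qed

lemma inj_on_position_upset:
  assumes ord: "\<And>S. S \<in> upsets k R \<Longrightarrow> length (\<pi> S) = n \<and> distinct (\<pi> S) \<and> set (\<pi> S) = S"
    and S: "S \<in> upsets k R"
  shows "inj_on (position (\<pi> S)) R \<and> position (\<pi> S) ` R \<subseteq> {..<n}"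
proof -
  have "R \<subseteq> set (\<pi> S)" using S ord[OF S] by (auto simp: upsets_def)
  then show ?thesis using position_inj_into[of "\<pi> S" R] ord[OF S] by simp
qed

lemma card_disagree_positions_le_2:
  assumes ord: "\<And>S. S \<in> upsets k R \<Longrightarrow> length (\<pi> S) = n \<and> distinct (\<pi> S) \<and> set (\<pi> S) = S"
    and adj: "\<And>S S'. S \<subseteq> {1..k} \<Longrightarrow> card S = n \<Longrightarrow> S' \<subseteq> {1..k} \<Longrightarrow> card S' = n \<Longrightarrow>
                 card (symdiff S S') = 2 \<Longrightarrow> hamming (\<pi> S) (\<pi> S') \<le> 3"
    and R: "R \<subseteq> {1..k}" "n = Suc (card R)"
    and S: "S \<in> upsets k R" "S' \<in> upsets k R"
  shows "card (disagree R (position (\<pi> S)) (position (\<pi> S'))) \<le> 2"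
proof -
  have "S \<in> (\<lambda>x. insert x R) ` ({1..k} - R)" "S' \<in> (\<lambda>x. insert x R) ` ({1..k} - R)"
    using S by (simp_all add: upsets_eq_image_insert[OF R(1)])
  then obtain x x' where x: "S = insert x R" "x \<in> {1..k} - R" and x': "S' = insert x' R" "x' \<in> {1..k} - R"
    by (elim imageE)
  show ?thesis
  proof (cases "x = x'")
    case True
    then show ?thesis using x x' by (simp add: disagree_def)
  next
    case False
    have "S \<subseteq> {1..k}" "card S = n" "S' \<subseteq> {1..k}" "card S' = n"
      using S R(2) unfolding upsets_def by auto
    moreover have "card (symdiff S S') = 2"
    proof -
      have "symdiff S S' = {x, x'}" using x x' False by (auto simp: symdiff_def)
      with False show ?thesis by simp
    qed
    ultimately have "hamming (\<pi> S) (\<pi> S') \<le> 3" by (rule adj)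
    moreover have "card (disagree R (position (\<pi> S)) (position (\<pi> S'))) < hamming (\<pi> S) (\<pi> S')"
    proof (rule card_disagree_position_less_hamming)
      show "distinct (\<pi> S)" "distinct (\<pi> S')" "length (\<pi> S) = length (\<pi> S')"
        using ord[OF S(1)] ord[OF S(2)] by simp_all
      show "R \<subseteq> set (\<pi> S)" "x \<in> set (\<pi> S)" "R \<subseteq> set (\<pi> S')" "x \<notin> set (\<pi> S')"
        using ord[OF S(1)] ord[OF S(2)] x x' False by auto
    qed
    ultimately show ?thesis by simp
  qed
qed

lemma upset_positions_dichotomy:
  assumes ord: "\<And>S. S \<in> upsets k R \<Longrightarrow> length (\<pi> S) = n \<and> distinct (\<pi> S) \<and> set (\<pi> S) = S"
    and adj: "\<And>S S'. S \<subseteq> {1..k} \<Longrightarrow> card S = n \<Longrightarrow> S' \<subseteq> {1..k} \<Longrightarrow> card S' = n \<Longrightarrow>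
                 card (symdiff S S') = 2 \<Longrightarrow> hamming (\<pi> S) (\<pi> S') \<le> 3"
    and R: "R \<subseteq> {1..k}" "n = Suc (card R)"
    and S0: "S0 \<in> upsets k R"
  shows "(\<exists>B \<subseteq> R. card B \<le> 2 \<and>
            (\<forall>S\<in>upsets k R. disagree R (position (\<pi> S0)) (position (\<pi> S)) \<subseteq> B)) \<or>
         (\<exists>h. inj_on h R \<and> h ` R \<subseteq> {..<n} \<and>
            (\<forall>S\<in>upsets k R. card (disagree R h (position (\<pi> S))) \<le> 1))"
proof -
  let ?F = "(\<lambda>S. position (\<pi> S)) ` upsets k R"
  have "finite R" using R(1) finite_subset by blast
  have T: "card {..<n} = Suc (card R)" using R(2) by simp
  have F: "inj_on f R \<and> f ` R \<subseteq> {..<n}" if "f \<in> ?F" for f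
    using that by (elim imageE) (simp add: inj_on_position_upset[OF ord])
  have close: "card (disagree R f g) \<le> 2" if fg: "f \<in> ?F" "g \<in> ?F" for f g
  proof -
    obtain S S' where S: "S \<in> upsets k R" "S' \<in> upsets k R"
      and fg_eq: "f = position (\<pi> S)" "g = position (\<pi> S')"
      using fg by blast
    show ?thesis unfolding fg_eq by (rule card_disagree_positions_le_2[OF ord adj R S])
  qed
  have f0: "position (\<pi> S0) \<in> ?F" using S0 by blast
  have "(\<exists>B \<subseteq> R. card B \<le> 2 \<and> (\<forall>f\<in>?F. disagree R (position (\<pi> S0)) f \<subseteq> B)) \<or>
      (\<exists>h. inj_on h R \<and> h ` R \<subseteq> {..<n} \<and> (\<forall>f\<in>?F. card (disagree R h f) \<le> 1))"
    by (rule injection_family_dichotomy[OF T \<open>finite R\<close> F close f0])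
  then show ?thesis
  proof (elim disjE exE conjE)
    fix B assume B: "B \<subseteq> R" "card B \<le> 2" "\<forall>f\<in>?F. disagree R (position (\<pi> S0)) f \<subseteq> B"
    have "\<forall>S\<in>upsets k R. disagree R (position (\<pi> S0)) (position (\<pi> S)) \<subseteq> B"
      using ball_imageD[OF B(3)] .
    with B(1,2) show ?thesis by (intro disjI1 exI[of _ B]) simp
  next
    fix h assume h: "inj_on h R" "h ` R \<subseteq> {..<n}" "\<forall>f\<in>?F. card (disagree R h f) \<le> 1"
    have "\<forall>S\<in>upsets k R. card (disagree R h (position (\<pi> S))) \<le> 1"
      using ball_imageD[OF h(3)] .
    with h(1,2) show ?thesis by (intro disjI2 exI[of _ h]) simp
  qed
qed

lemma freezes_mono:
  assumes "freezes \<pi> k n R A" and "A' \<subseteq> A"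
  shows "freezes \<pi> k n R A'"
proof -
  obtain g where "inj_on g A" "g ` A \<subseteq> {..<n}" "\<forall>a\<in>A. \<forall>S\<in>upsets k R. \<pi> S ! g a = a"
    using assms(1) unfolding freezes_def by blast
  with assms(2) show ?thesis unfolding freezes_def by (intro exI[of _ g]) (auto intro: inj_on_subset)
qed

lemma freezes_if_positions_agree:
  assumes ord: "\<And>S. S \<in> upsets k R \<Longrightarrow> length (\<pi> S) = n \<and> distinct (\<pi> S) \<and> set (\<pi> S) = S"
    and S0: "S0 \<in> upsets k R"
    and agree: "\<forall>S\<in>upsets k R. disagree R (position (\<pi> S0)) (position (\<pi> S)) \<subseteq> B"
  shows "freezes \<pi> k n R (R - B)"
  unfolding freezes_def
proof (intro exI conjI ballI)
  show "inj_on (position (\<pi> S0)) (R - B)" "position (\<pi> S0) ` (R - B) \<subseteq> {..<n}"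
    using inj_on_position_upset[OF ord S0] by (auto intro: inj_on_subset)
  fix a S assume a: "a \<in> R - B" and S: "S \<in> upsets k R"
  then have "position (\<pi> S) a = position (\<pi> S0) a"
    using bspec[OF agree S] by (auto simp: disagree_def)
  moreover have "a \<in> set (\<pi> S)" using a S ord[OF S] by (auto simp: upsets_def)
  ultimately show "\<pi> S ! position (\<pi> S0) a = a" using nth_position ord[OF S] by metis
qed

lemma ex_frozen_subset_if_positions_agree:
  assumes ord: "\<And>S. S \<in> upsets k R \<Longrightarrow> length (\<pi> S) = n \<and> distinct (\<pi> S) \<and> set (\<pi> S) = S"
    and R: "finite R" "n = Suc (card R)"
    and S0: "S0 \<in> upsets k R"
    and B: "B \<subseteq> R" "card B \<le> 2"
    and agree: "\<forall>S\<in>upsets k R. disagree R (position (\<pi> S0)) (position (\<pi> S)) \<subseteq> B"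
  shows "\<exists>A. A \<subseteq> R \<and> card A = n - 3 \<and> freezes \<pi> k n R A"
proof -
  have "n - 3 \<le> card (R - B)" using B R by (simp add: card_Diff_subset finite_subset)
  then obtain A where A: "A \<subseteq> R - B" "card A = n - 3" by (rule obtain_subset_with_card_n)
  have "freezes \<pi> k n R (R - B)" using freezes_if_positions_agree[OF ord S0 agree] .
  then have "freezes \<pi> k n R A" using A(1) by (rule freezes_mono)
  with A show ?thesis by blast
qed

lemma semi_frozen_if_near_positions:
  assumes ord: "\<And>S. S \<in> upsets k R \<Longrightarrow> length (\<pi> S) = n \<and> distinct (\<pi> S) \<and> set (\<pi> S) = S"
    and R: "finite R" "n = Suc (card R)"
    and h: "inj_on h R" "h ` R \<subseteq> {..<n}"
    and near: "\<forall>S\<in>upsets k R. card (disagree R h (position (\<pi> S))) \<le> 1"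
  shows "semi_frozen \<pi> k n R"
proof -
  obtain w where w: "{..<n} - h ` R = {w}"
    using complement_of_image_singleton[of "{..<n}" R h] R h by auto
  have "\<pi> S ! h r = r \<or> \<pi> S ! w = r" if r: "r \<in> R" and S: "S \<in> upsets k R" for r S
  proof -
    have "r \<in> set (\<pi> S)" using r S ord[OF S] by (auto simp: upsets_def)
    then have nth: "\<pi> S ! position (\<pi> S) r = r" using ord[OF S] by (simp add: nth_position)
    show ?thesis
    proof (cases "position (\<pi> S) r = h r")
      case True
      with nth show ?thesis by simp
    next
      case False
      then have "r \<in> disagree R h (position (\<pi> S))" using r by (simp add: disagree_def)
      moreover have "\<forall>r1\<in>disagree R h (position (\<pi> S)). \<forall>r2\<in>disagree R h (position (\<pi> S)). r1 = r2"
        using bspec[OF near S] card_le_Suc0_iff_eq[OF finite_disagree[OF R(1)]] by (metis One_nat_def)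
      ultimately have single: "disagree R h (position (\<pi> S)) = {r}" by blast
      have pos: "inj_on (position (\<pi> S)) R" "position (\<pi> S) ` R \<subseteq> {..<n}"
        using inj_on_position_upset[OF ord S] by simp_all
      have "position (\<pi> S) r \<notin> h ` R" by (rule deviation_value_not_in_image[OF pos(1) single])
      moreover have "position (\<pi> S) r < n" using pos(2) r by (simp add: image_subset_iff)
      ultimately have "position (\<pi> S) r = w" using w by blast
      with nth show ?thesis by simp
    qed
  qed
  with h w show ?thesis unfolding semi_frozen_def by blast
qed

theorem lemma3p5:
  fixes k n :: nat and \<pi> :: "nat set \<Rightarrow> nat list"
  assumes "3 \<le> n" and "n \<le> k"
    and perm: "\<And>S. S \<subseteq> {1..k} \<Longrightarrow> card S = n \<Longrightarrow>
                 length (\<pi> S) = n \<and> distinct (\<pi> S) \<and> set (\<pi> S) = S"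
    and adj: "\<And>S S'. S \<subseteq> {1..k} \<Longrightarrow> card S = n \<Longrightarrow> S' \<subseteq> {1..k} \<Longrightarrow> card S' = n \<Longrightarrow>
                 card (symdiff S S') = 2 \<Longrightarrow> hamming (\<pi> S) (\<pi> S') \<le> 3"
  shows "\<forall>R. R \<subseteq> {1..k} \<and> card R = n - 1 \<longrightarrow>
           (\<exists>A. A \<subseteq> R \<and> card A = n - 3 \<and> freezes \<pi> k n R A) \<or> semi_frozen \<pi> k n R"
proof (intro allI impI)
  fix R assume "R \<subseteq> {1..k} \<and> card R = n - 1"
  then have R: "R \<subseteq> {1..k}" "n = Suc (card R)" and "finite R"
    using \<open>3 \<le> n\<close> finite_subset by auto
  have ord: "\<And>S. S \<in> upsets k R \<Longrightarrow> length (\<pi> S) = n \<and> distinct (\<pi> S) \<and> set (\<pi> S) = S"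
    using perm R(2) by (simp add: upsets_def)
  obtain S0 where S0: "S0 \<in> upsets k R" using ex_upset[OF R(1)] R(2) \<open>n \<le> k\<close> by auto
  from upset_positions_dichotomy[OF ord adj R S0]
  consider (frozen) B where "B \<subseteq> R" "card B \<le> 2"
      "\<forall>S\<in>upsets k R. disagree R (position (\<pi> S0)) (position (\<pi> S)) \<subseteq> B"
    | (semi_frozen) h where "inj_on h R" "h ` R \<subseteq> {..<n}"
      "\<forall>S\<in>upsets k R. card (disagree R h (position (\<pi> S))) \<le> 1"
    by blast
  then show "(\<exists>A. A \<subseteq> R \<and> card A = n - 3 \<and> freezes \<pi> k n R A) \<or> semi_frozen \<pi> k n R"
  proof cases
    case frozen
    have "\<exists>A. A \<subseteq> R \<and> card A = n - 3 \<and> freezes \<pi> k n R A"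
      using ex_frozen_subset_if_positions_agree[OF ord \<open>finite R\<close> R(2) S0 frozen] .
    then show ?thesis ..
  next
    case semi_frozen
    have "semi_frozen \<pi> k n R" using semi_frozen_if_near_positions[OF ord \<open>finite R\<close> R(2) semi_frozen] .
    then show ?thesis ..
  qed
qed

end
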